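(* Let $n$ be such that $n$ or $1/n$ is a positive integer, let $\Delta_n=\mathrm{diag}(n,\frac1n,1,\dots,1)\in\mathcal{M}_{2g}(\mathbb{Q})$, and let $V$, $W$ be Seifert matrices with $W=\Delta_nV\Delta_n$. Then there are enlargements $\tilde V$ of $V$ and $\tilde W$ of $W$ with $\tilde W=P\tilde VP^t$ for some integral symplectic matrix $P$. Furthermore, if $(M,K,\Sigma,\underline f,V)$ and $(M',K',\Sigma',\underline f',W)$ are $\mathbb{Q}$SK-systems, then $W$ can be obtained from $V$ by a sequence of one enlargement, one integral symplectic congruence and one reduction, which induces the same $\tau$-class of isomorphisms $\mathcal{A}(K)\to\mathcal{A}(K')$ as the congruence $W=\Delta_nV\Delta_n$.
   Context: $J$: $2g\times2g$ block-diagonal with blocks $\begin{pmatrix}0&-1\\1&0\end{pmatrix}$. Seifert matrix: $V\in\mathcal{M}_{2g}(\mathbb{Q})$ with $V-V^t=J$ (note $\Delta_n$ is symplectic). $P$ symplectic: $PJP^t=J$. Row enlargement of $V$: $\begin{pmatrix}0&0&0\\1&x&\rho^t\\0&\rho&V\end{pmatrix}$; column enlargement: $\begin{pmatrix}0&-1&0\\0&x&\rho^t\\0&\rho&V\end{pmatrix}$ ($x\in\mathbb{Q}$, $\rho\in\mathbb{Q}^{2g}$); $V$ is a reduction of these. $\mathbb{Q}$SK-system $(M,K,\Sigma,\underline f,V)$: a rational homology 3-sphere $M$, knot $K$ trivial in $H_1(M;\mathbb{Z})$, Seifert surface $\Sigma$ of genus $g$, basis $(f_i)$ of $H_1(\Sigma;\mathbb{Z})$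 with intersection matrix $-J$, $V_{ij}=lk(f_i,f_j^+)$. $\mathcal{A}(K)=H_1(\tilde X;\mathbb{Q})$ for the infinite cyclic covering $\tilde X$ of the exterior, $t$ acting by a deck generator. Associated generators $(b_i)$: lifts of meridians of the $f_i$, generating $\mathcal{A}(K)$ with relations $\sum_i(tV-V^t)_{ij}b_i$, defined up to a common factor $t^k$. Induced $\tau$-class (the $\tau$-class of $\xi$ is $\{\xi\circ m_k\}$, $m_k$ multiplication by $t^k$): for a congruence $V'=PVP^t$, the class of $b_i\mapsto\sum_kP_{ki}b'_k$; for an enlargement, the class of $b_i\mapsto b'_{i+2}$ (generators of the enlarged matrix indexed $1,\dots,2g+2$); reductions give inverses; sequences give compositions. Here the intermediate enlarged matrices define modules by the same presentation. *)

theory Defs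
  imports "HOL-Computational_Algebra.Polynomial"
begin

text \<open>Matrices are functions nat => nat => rat, indices 0-based; an m x m matrix
  is supported on {0..<m} x {0..<m}.\<close>

type_synonym qmat = "nat \<Rightarrow> nat \<Rightarrow> rat"

definition supported :: "nat \<Rightarrow> qmat \<Rightarrow> bool" where
  "supported m A \<longleftrightarrow> (\<forall>i j. \<not> (i < m \<and> j < m) \<longrightarrow> A i j = 0)"

definition mmul :: "nat \<Rightarrow> qmat \<Rightarrow> qmat \<Rightarrow> qmat" where
  "mmul m A B = (\<lambda>i j. \<Sum>k<m. A i k * B k j)"

definition mtrans :: "qmat \<Rightarrow> qmat" where
  "mtrans A = (\<lambda>i j. A j i)"

definition Jmat :: "nat \<Rightarrow> qmat" where
  "Jmat g = (\<lambda>i j. if i < 2*g \<and> j < 2*g then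
       (if even i \<and> j = i + 1 then -1 else if odd i \<and> i = j + 1 then 1 else 0) else 0)"

definition seifert_matrix :: "nat \<Rightarrow> qmat \<Rightarrow> bool" where
  "seifert_matrix g V \<longleftrightarrow> supported (2*g) V \<and>
     (\<forall>i<2*g. \<forall>j<2*g. V i j - V j i = Jmat g i j)"

definition integral_symplectic :: "nat \<Rightarrow> qmat \<Rightarrow> bool" where
  "integral_symplectic g P \<longleftrightarrow> supported (2*g) P \<and> (\<forall>i j. P i j \<in> \<int>) \<and>
     mmul (2*g) (mmul (2*g) P (Jmat g)) (mtrans P) = Jmat g"

definition Delta :: "nat \<Rightarrow> rat \<Rightarrow> qmat" where
  "Delta g n = (\<lambda>i j. if i = j \<and> i < 2*g then
       (if i = 0 then n else if i = 1 then 1 / n else 1) else 0)"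

text \<open>Row enlargement ((0,0,0),(1,x,rho^t),(0,rho,V)) and column enlargement
  ((0,-1,0),(0,x,rho^t),(0,rho,V)) of a 2g x 2g matrix V; the generators of the
  enlarged matrix are indexed 0,...,2g+1, the old ones becoming i+2.\<close>
definition row_enl :: "nat \<Rightarrow> qmat \<Rightarrow> rat \<Rightarrow> (nat \<Rightarrow> rat) \<Rightarrow> qmat" where
  "row_enl g V x \<rho> = (\<lambda>i j. if i < 2*g+2 \<and> j < 2*g+2 then
      (if i = 0 then 0
       else if i = 1 then (if j = 0 then 1 else if j = 1 then x else \<rho> (j-2))
       else (if j = 0 then 0 else if j = 1 then \<rho> (i-2) else V (i-2) (j-2)))
     else 0)"

definition col_enl :: "nat \<Rightarrow> qmat \<Rightarrow> rat \<Rightarrow> (nat \<Rightarrow> rat) \<Rightarrow> qmat" where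
  "col_enl g V x \<rho> = (\<lambda>i j. if i < 2*g+2 \<and> j < 2*g+2 then
      (if i = 0 then (if j = 1 then -1 else 0)
       else if i = 1 then (if j = 0 then 0 else if j = 1 then x else \<rho> (j-2))
       else (if j = 0 then 0 else if j = 1 then \<rho> (i-2) else V (i-2) (j-2)))
     else 0)"

definition is_enlargement :: "nat \<Rightarrow> qmat \<Rightarrow> qmat \<Rightarrow> bool" where
  "is_enlargement g V V' \<longleftrightarrow> (\<exists>x \<rho>. V' = row_enl g V x \<rho> \<or> V' = col_enl g V x \<rho>)"

text \<open>An element of the free module on generators b_0..b_(m-1) is a coefficient vector
  nat => rat poly.  Laurent coefficients are handled by allowing multiplication by powers
  of t: two vectors are equal in the module presented by V (of size m) iff t^N times their
  difference lies in the Q[t]-span of the relation vectors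
  r_j = sum_i (tV - V^t)_(ij) b_i, j < m.\<close>

type_synonym lvec = "nat \<Rightarrow> rat poly"
type_synonym gmap = "nat \<Rightarrow> lvec"  \<comment> \<open>image of each generator b_i\<close>

definition rel_coeff :: "qmat \<Rightarrow> nat \<Rightarrow> nat \<Rightarrow> rat poly" where
  "rel_coeff V j i = [: - V j i, V i j :]"   \<comment> \<open>(tV - V^t)_(ij)\<close>

definition mod_eq :: "nat \<Rightarrow> qmat \<Rightarrow> lvec \<Rightarrow> lvec \<Rightarrow> bool" where
  "mod_eq m V v w \<longleftrightarrow> (\<exists>N c. \<forall>i<m.
      monom 1 N * (v i - w i) = (\<Sum>j<m. c j * rel_coeff V j i))"

definition comp_map :: "nat \<Rightarrow> gmap \<Rightarrow> gmap \<Rightarrow> gmap" where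
  "comp_map mid \<psi> \<xi> = (\<lambda>i k. \<Sum>j<mid. \<xi> i j * \<psi> j k)"   \<comment> \<open>psi after xi\<close>

definition id_map :: gmap where
  "id_map = (\<lambda>i k. if k = i then 1 else 0)"

definition cong_map :: "nat \<Rightarrow> qmat \<Rightarrow> gmap" where
  "cong_map m P = (\<lambda>i k. if k < m then [: P k i :] else 0)"  \<comment> \<open>b_i |-> sum_k P_(ki) b'_k\<close>

definition enl_map :: gmap where
  "enl_map = (\<lambda>i k. if k = i + 2 then 1 else 0)"

definition well_defined_map :: "nat \<Rightarrow> qmat \<Rightarrow> nat \<Rightarrow> qmat \<Rightarrow> gmap \<Rightarrow> bool" where
  "well_defined_map m V m' W \<phi> \<longleftrightarrow>
     (\<forall>j<m. mod_eq m' W (\<lambda>k. \<Sum>i<m. rel_coeff V j i * \<phi> i k) (\<lambda>_. 0))"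

definition map_eq :: "nat \<Rightarrow> nat \<Rightarrow> qmat \<Rightarrow> gmap \<Rightarrow> gmap \<Rightarrow> bool" where
  "map_eq m m' W \<xi> \<eta> \<longleftrightarrow> (\<forall>i<m. mod_eq m' W (\<xi> i) (\<eta> i))"

text \<open>Same tau-class: eta = xi o m_k for some integer k (m_k multiplication by t^k),
  expressed as t^a xi = t^b eta with a, b natural.\<close>
definition same_tau_class :: "nat \<Rightarrow> nat \<Rightarrow> qmat \<Rightarrow> gmap \<Rightarrow> gmap \<Rightarrow> bool" where
  "same_tau_class m m' W \<xi> \<eta> \<longleftrightarrow> (\<exists>a b. \<forall>i<m.
      mod_eq m' W (\<lambda>k. monom 1 a * \<xi> i k) (\<lambda>k. monom 1 b * \<eta> i k))"

end

theory Submission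
  imports Defs
begin

(*
  The congruence W = Delta V Delta is rational, not integral, but it becomes integral after
  enlarging: a 4 x 4 integral symplectic block acting on the two enlargement generators and
  the first symplectic pair (identity elsewhere) carries a column enlargement of V to a row
  enlargement of W.  For n = N the enlargement parameters come from row 1 of V and column 0
  of W; for n = 1/N the roles of the first two generators are exchanged.

  The relations of a row enlargement read t b_1 = 0 and b_0 = (t - 1) sum_k rho_k b_(k+2),
  so eliminating b_0 and b_1 inverts the enlargement.  Following a generator of A(V) through
  enlargement, congruence and this reduction gives Delta_ii b_i up to a single relation of W
  (its relation 0 for n = N, its relation 1 for n = 1/N), so the composite induces the same
  tau-class as the congruence by Delta, with exponent 0.
*)

lemma sum_lessThan_add_2_shift:
  fixes m :: nat
  shows "(\<Sum>i<m+2. f i) = f 0 + f 1 + (\<Sum>i<m. f (i + 2))"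
  unfolding add_2_eq_Suc' by (simp add: sum.lessThan_Suc_shift add.assoc del: sum.lessThan_Suc)

lemma sum_lessThan_4: "(\<Sum>k<4::nat. f k) = f 0 + f 1 + f 2 + f 3"
  by (simp add: eval_nat_numeral)

lemma all_less_4: "(\<forall>i<4::nat. P i) \<longleftrightarrow> P 0 \<and> P 1 \<and> P 2 \<and> P 3"
  by (auto simp: eval_nat_numeral less_Suc_eq)

lemma sum_if_eq_mult:
  assumes "j < (m::nat)"
  shows "(\<Sum>i<m. (if i = j then a else 0) * f i) = a * (f j :: 'a::semiring_0)"
  using assms by (simp add: if_distrib[of "\<lambda>x. x * _"] cong: if_cong)

lemma mmul_diagonal_left:
  assumes "supported m D" and "\<And>i j. i \<noteq> j \<Longrightarrow> D i j = 0"
  shows "mmul m D X i j = D i i * X i j"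
proof -
  have "mmul m D X i j = (\<Sum>k<m. if k = i then D i i * X i j else 0)"
    unfolding mmul_def by (intro sum.cong) (auto simp: assms(2))
  then show ?thesis using assms(1) by (auto simp: supported_def)
qed

lemma mmul_diagonal_right:
  assumes "supported m D" and "\<And>i j. i \<noteq> j \<Longrightarrow> D i j = 0"
  shows "mmul m X D i j = X i j * D j j"
proof -
  have "mmul m X D i j = (\<Sum>k<m. if k = j then X i j * D j j else 0)"
    unfolding mmul_def by (intro sum.cong) (auto simp: assms(2))
  then show ?thesis using assms(1) by (auto simp: supported_def)
qed

lemma Delta_congruence_entry:
  "mmul (2*g) (mmul (2*g) (Delta g n) V) (Delta g n) i j
     = Delta g n i i * V i j * Delta g n j j"
proof -
  have "supported (2*g) (Delta g n)" "\<And>i j. i \<noteq> j \<Longrightarrow> Delta g n i j = 0"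
    by (auto simp: supported_def Delta_def)
  then show ?thesis by (simp add: mmul_diagonal_left mmul_diagonal_right)
qed

lemma seifert_matrix_first_columns:
  assumes "seifert_matrix g V" and "k < 2*g"
  shows "V k 0 = V 0 k + (if k = 1 then 1 else 0)"
    and "V k 1 = V 1 k - (if k = 0 then 1 else 0)"
proof -
  have "V k j - V j k = Jmat g k j" if "j < 2*g" for j
    using assms that by (simp add: seifert_matrix_def)
  moreover have "0 < 2*g" "1 < 2*g" using assms(2) by presburger+
  ultimately show "V k 0 = V 0 k + (if k = 1 then 1 else 0)"
    and "V k 1 = V 1 k - (if k = 0 then 1 else 0)"
    by (auto simp: Jmat_def algebra_simps)
qed

definition diag_block :: "nat \<Rightarrow> rat list list \<Rightarrow> qmat" where
  "diag_block g B = (\<lambda>i j. if i < 4 \<and> j < 4 then B ! i ! j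
     else if i = j \<and> i < 2*g+2 then 1 else 0)"

lemma sum_lessThan_restrict_4:
  fixes g :: nat
  assumes "1 \<le> g"
  shows "(\<Sum>k<2*g+2. if k < 4 then f k else 0) = (\<Sum>k<4. f k)"
proof -
  have "(\<Sum>k<2*g+2. if k < 4 then f k else 0) = sum f ({..<2*g+2} \<inter> {k. k < 4})"
    by (simp add: sum.inter_restrict del: sum.lessThan_Suc)
  also have "{..<2*g+2} \<inter> {k. k < 4} = {..<4}" using assms by auto
  finally show ?thesis .
qed

lemma mmul_diag_block_left:
  assumes "1 \<le> g"
  shows "mmul (2*g+2) (diag_block g B) X i j =
    (if i < 4 then \<Sum>k<4. B ! i ! k * X k j else if i < 2*g+2 then X i j else 0)"
proof (cases "i < 4")
  case True
  have "mmul (2*g+2) (diag_block g B) X i j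
      = (\<Sum>k<2*g+2. if k < 4 then B ! i ! k * X k j else 0)"
    unfolding mmul_def using True by (intro sum.cong) (auto simp: diag_block_def)
  also have "\<dots> = (\<Sum>k<4. B ! i ! k * X k j)"
    by (rule sum_lessThan_restrict_4[OF assms])
  finally show ?thesis using True by simp
next
  case False
  have "mmul (2*g+2) (diag_block g B) X i j = (\<Sum>k<2*g+2. if k = i then X i j else 0)"
    unfolding mmul_def using False by (intro sum.cong) (auto simp: diag_block_def)
  then show ?thesis using False by (simp del: sum.lessThan_Suc)
qed

lemma mmul_diag_block_right:
  assumes "1 \<le> g"
  shows "mmul (2*g+2) X (mtrans (diag_block g B)) i j =
    (if j < 4 then \<Sum>k<4. X i k * B ! j ! k else if j < 2*g+2 then X i j else 0)"
proof (cases "j < 4")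
  case True
  have "mmul (2*g+2) X (mtrans (diag_block g B)) i j
      = (\<Sum>k<2*g+2. if k < 4 then X i k * B ! j ! k else 0)"
    unfolding mmul_def using True by (intro sum.cong) (auto simp: diag_block_def mtrans_def)
  also have "\<dots> = (\<Sum>k<4. X i k * B ! j ! k)"
    by (rule sum_lessThan_restrict_4[OF assms])
  finally show ?thesis using True by simp
next
  case False
  have "mmul (2*g+2) X (mtrans (diag_block g B)) i j
      = (\<Sum>k<2*g+2. if k = j then X i j else 0)"
    unfolding mmul_def using False by (intro sum.cong) (auto simp: diag_block_def mtrans_def)
  then show ?thesis using False by (simp del: sum.lessThan_Suc)
qed

lemma diag_block_congruence_eqI:
  assumes g: "1 \<le> g"
    and block: "\<forall>i<4. \<forall>j<4. (\<Sum>l<4. (\<Sum>k<4. B!i!k * X k l) * B!j!l) = Y i j"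
    and upper: "\<forall>i<4. \<forall>c. 2 \<le> c \<longrightarrow> c < 2*g \<longrightarrow> (\<Sum>k<4. B!i!k * X k (c+2)) = Y i (c+2)"
    and lower: "\<forall>c. 2 \<le> c \<longrightarrow> c < 2*g \<longrightarrow> (\<forall>j<4. (\<Sum>k<4. X (c+2) k * B!j!k) = Y (c+2) j)"
    and rest: "\<forall>c d. 2 \<le> c \<longrightarrow> c < 2*g \<longrightarrow> 2 \<le> d \<longrightarrow> d < 2*g \<longrightarrow>
      X (c+2) (d+2) = Y (c+2) (d+2)"
    and outside: "\<forall>i j. \<not> (i < 2*g+2 \<and> j < 2*g+2) \<longrightarrow> Y i j = 0"
  shows "mmul (2*g+2) (mmul (2*g+2) (diag_block g B) X) (mtrans (diag_block g B)) = Y"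
proof (intro ext)
  fix i j
  have index_cases: "k < 4 \<or> (\<exists>c. k = c+2 \<and> 2 \<le> c \<and> c < 2*g) \<or> \<not> k < 2*g+2" for k :: nat
    by presburger
  show "mmul (2*g+2) (mmul (2*g+2) (diag_block g B) X) (mtrans (diag_block g B)) i j = Y i j"
    unfolding mmul_diag_block_right[OF g] mmul_diag_block_left[OF g]
    using index_cases[of i] index_cases[of j] block upper lower rest outside
    by auto
qed

lemma diag_block_integral_symplectic:
  assumes g: "1 \<le> g"
    and integral: "\<forall>i<4. \<forall>j<4. B!i!j \<in> \<int>"
    and symplectic: "\<forall>i<4. \<forall>j<4. (\<Sum>l<4. (\<Sum>k<4. B!i!k * Jmat 2 k l) * B!j!l) = Jmat 2 i j"
  shows "integral_symplectic (g+1) (diag_block g B)"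
proof -
  have "Jmat 2 k l = Jmat (g+1) k l" if "k < 4" "l < 4" for k l
    using g that by (simp add: Jmat_def)
  then have "mmul (2*g+2) (mmul (2*g+2) (diag_block g B) (Jmat (g+1))) (mtrans (diag_block g B))
      = Jmat (g+1)"
    using symplectic
    by (intro diag_block_congruence_eqI[OF g]) (auto simp: Jmat_def sum_lessThan_4)
  moreover have "supported (2*(g+1)) (diag_block g B)"
    using g by (auto simp: supported_def diag_block_def)
  moreover have "diag_block g B i j \<in> \<int>" for i j
    using integral by (simp add: diag_block_def)
  ultimately show ?thesis by (simp add: integral_symplectic_def)
qed

definition block_mult :: "rat \<Rightarrow> rat list list" where
  "block_mult n = [[0, n, 0, -1], [0, 0, 1, 0], [1, 0, n, 0], [0, 1, 0, 0]]"

definition block_div :: "rat \<Rightarrow> rat list list" where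
  "block_div N = [[0, N, -1, 0], [0, 0, 0, -1], [0, 1, 0, 0], [-1, 0, 0, N]]"

lemma block_mult_integral_symplectic:
  "1 \<le> g \<Longrightarrow> n \<in> \<int> \<Longrightarrow> integral_symplectic (g+1) (diag_block g (block_mult n))"
  by (rule diag_block_integral_symplectic)
    (simp_all add: all_less_4 sum_lessThan_4 block_mult_def Jmat_def)

lemma block_div_integral_symplectic:
  "1 \<le> g \<Longrightarrow> N \<in> \<int> \<Longrightarrow> integral_symplectic (g+1) (diag_block g (block_div N))"
  by (rule diag_block_integral_symplectic)
    (simp_all add: all_less_4 sum_lessThan_4 block_div_def Jmat_def)

lemma block_mult_congruence:
  assumes g: "1 \<le> g" and n: "n \<noteq> 0" and V: "seifert_matrix g V"
    and W: "W = mmul (2*g) (mmul (2*g) (Delta g n) V) (Delta g n)"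
  shows "mmul (2*g+2) (mmul (2*g+2) (diag_block g (block_mult n))
      (col_enl g V (V 1 1 / n^2) (\<lambda>j. V 1 j / n))) (mtrans (diag_block g (block_mult n)))
    = row_enl g W (W 0 0 / n^2) (\<lambda>j. W j 0 / n)"
proof -
  have g2: "0 < 2*g" "1 < 2*g" using g by auto
  have V10: "V 1 0 = V 0 1 + 1"
    using seifert_matrix_first_columns(1)[OF V g2(2)] by simp
  have Vc: "V c 0 = V 0 c" "V c 1 = V 1 c" if "2 \<le> c" "c < 2*g" for c
    using seifert_matrix_first_columns[OF V that(2)] that(1) by auto
  have W_entry: "W i j = Delta g n i i * V i j * Delta g n j j" for i j
    unfolding W by (rule Delta_congruence_entry)
  show ?thesis
    by (rule diag_block_congruence_eqI[OF g])
      (use g2 V10 Vc n in \<open>simp_all add: all_less_4 sum_lessThan_4 block_mult_def col_enl_def row_enl_def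
        W_entry Delta_def field_simps power2_eq_square\<close>)
qed

lemma block_div_congruence:
  assumes g: "1 \<le> g" and n: "n * N = 1" and V: "seifert_matrix g V"
    and W: "W = mmul (2*g) (mmul (2*g) (Delta g n) V) (Delta g n)"
  shows "mmul (2*g+2) (mmul (2*g+2) (diag_block g (block_div N))
      (col_enl g V (n^2 * V 0 0) (\<lambda>j. n * V 0 j))) (mtrans (diag_block g (block_div N)))
    = row_enl g W (n^2 * W 1 1) (\<lambda>j. - (n * W j 1))"
proof -
  have g2: "0 < 2*g" "1 < 2*g" using g by auto
  have V10: "V 1 0 = V 0 1 + 1"
    using seifert_matrix_first_columns(1)[OF V g2(2)] by simp
  have Vc: "V c 0 = V 0 c" "V c 1 = V 1 c" if "2 \<le> c" "c < 2*g" for c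
    using seifert_matrix_first_columns[OF V that(2)] that(1) by auto
  have n0: "n \<noteq> 0" using n by auto
  then have N: "N = 1 / n" using n by (simp add: field_simps)
  have W_entry: "W i j = Delta g n i i * V i j * Delta g n j j" for i j
    unfolding W by (rule Delta_congruence_entry)
  show ?thesis
    by (rule diag_block_congruence_eqI[OF g])
      (use g2 V10 Vc n0 in \<open>simp_all add: all_less_4 sum_lessThan_4 block_div_def N col_enl_def row_enl_def
        W_entry Delta_def field_simps power2_eq_square\<close>)
qed

lemma mod_eq_by_relations:
  assumes "\<And>k. k < m \<Longrightarrow> v k - w k = (\<Sum>j<m. c j * rel_coeff W j k)"
  shows "mod_eq m W v w"
  unfolding mod_eq_def using assms by (intro exI[of _ 0] exI[of _ c]) simp

lemma same_tau_class_if_map_eq: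
  "map_eq m m' W \<xi> \<eta> \<Longrightarrow> same_tau_class m m' W \<xi> \<eta>"
  unfolding map_eq_def same_tau_class_def by (intro exI[of _ 0]) simp

definition row_reduction :: "(nat \<Rightarrow> rat) \<Rightarrow> gmap" where
  "row_reduction \<rho> = (\<lambda>i k. if i = 0 then [:- \<rho> k, \<rho> k:] else if i = 1 then 0
     else if k + 2 = i then 1 else 0)"

lemma sum_row_reduction:
  assumes "k < 2*g"
  shows "(\<Sum>i<2*g+2. f i * row_reduction \<rho> i k) = f 0 * [:- \<rho> k, \<rho> k:] + f (k+2)"
proof -
  have "(\<Sum>i<2*g. f (i+2) * (if k + 2 = i + 2 then 1 else 0)) = f (k+2)"
    using assms by (simp add: if_distrib[of "\<lambda>x. _ * x"] cong: if_cong)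
  then show ?thesis
    unfolding sum_lessThan_add_2_shift by (simp add: row_reduction_def)
qed

lemma row_reduction_well_defined:
  "well_defined_map (2*g+2) (row_enl g W x \<rho>) (2*g) W (row_reduction \<rho>)"
  unfolding well_defined_map_def
proof (intro allI impI)
  fix j assume j: "j < 2*g+2"
  let ?W' = "row_enl g W x \<rho>"
  show "mod_eq (2*g) W (\<lambda>k. \<Sum>i<2*g+2. rel_coeff ?W' j i * row_reduction \<rho> i k) (\<lambda>_. 0)"
  proof (rule mod_eq_by_relations[where c = "\<lambda>l. if 2 \<le> j \<and> l = j - 2 then 1 else 0"])
    fix k assume k: "k < 2*g"
    have "(\<Sum>i<2*g+2. rel_coeff ?W' j i * row_reduction \<rho> i k)
        = rel_coeff ?W' j 0 * [:- \<rho> k, \<rho> k:] + rel_coeff ?W' j (k+2)"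
      by (rule sum_row_reduction[OF k])
    also have "\<dots> = (if j < 2 then 0 else rel_coeff W (j-2) k)"
      using j k by (auto simp: rel_coeff_def row_enl_def less_2_cases_iff)
    also have "\<dots> = (\<Sum>l<2*g. (if 2 \<le> j \<and> l = j - 2 then 1 else 0) * rel_coeff W l k)"
      using j by (simp add: sum_if_eq_mult)
    finally show "(\<Sum>i<2*g+2. rel_coeff ?W' j i * row_reduction \<rho> i k) - 0
        = (\<Sum>l<2*g. (if 2 \<le> j \<and> l = j - 2 then 1 else 0) * rel_coeff W l k)"
      by simp
  qed
qed

lemma comp_enl_map:
  "comp_map (2*g) enl_map \<phi> i k = (if 2 \<le> k \<and> k < 2*g+2 then \<phi> i (k-2) else 0)"
proof -
  have "comp_map (2*g) enl_map \<phi> i k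
      = (\<Sum>j<2*g. if j = k - 2 then (if 2 \<le> k then \<phi> i j else 0) else 0)"
    unfolding comp_map_def enl_map_def by (rule sum.cong) auto
  then show ?thesis by auto
qed

lemma row_reduction_comp_enl:
  "map_eq (2*g) (2*g) W (comp_map (2*g+2) (row_reduction \<rho>) enl_map) id_map"
  unfolding map_eq_def
proof (intro allI impI)
  fix i assume i: "i < 2*g"
  have "comp_map (2*g+2) (row_reduction \<rho>) enl_map i k
      = (\<Sum>j<2*g+2. if j = i+2 then row_reduction \<rho> j k else 0)" for k
    unfolding comp_map_def enl_map_def by (rule sum.cong) auto
  then have "comp_map (2*g+2) (row_reduction \<rho>) enl_map i k = id_map i k" for k
    using i by (simp add: row_reduction_def id_map_def)
  then show "mod_eq (2*g) W (comp_map (2*g+2) (row_reduction \<rho>) enl_map i) (id_map i)"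
    by (intro mod_eq_by_relations[where c = "\<lambda>_. 0"]) simp
qed

lemma rel_coeff_row_enl_first_rows:
  assumes "k < 2*g+2"
  shows "rel_coeff (row_enl g W x \<rho>) 0 k = (if k = 1 then [:0, 1:] else 0)"
    and "rel_coeff (row_enl g W x \<rho>) 1 k =
      (if k = 0 then -1 else if k = 1 then [:-x, x:] else [:- \<rho> (k-2), \<rho> (k-2):])"
  using assms by (auto simp: rel_coeff_def row_enl_def one_pCons)

lemma enl_comp_row_reduction:
  "map_eq (2*g+2) (2*g+2) (row_enl g W x \<rho>) (comp_map (2*g) enl_map (row_reduction \<rho>)) id_map"
  unfolding map_eq_def mod_eq_def
proof (intro allI impI)
  fix i assume i: "i < 2*g+2"
  let ?W' = "row_enl g W x \<rho>"
  \<comment> \<open>with r_j the relations of the row enlargement: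
    t (image of b_0 - b_0) = t r_1 - (t - 1) x r_0 and t (0 - b_1) = - r_0\<close>
  define c :: "nat \<Rightarrow> rat poly" where
    "c j = (if i = 0 then (if j = 0 then - [:-x, x:] else if j = 1 then [:0, 1:] else 0)
      else if i = 1 \<and> j = 0 then -1 else 0)" for j
  have sum_c: "(\<Sum>j<2*g+2. c j * rel_coeff ?W' j k)
      = c 0 * rel_coeff ?W' 0 k + c 1 * rel_coeff ?W' 1 k" for k
  proof -
    have "c (j+2) = 0" for j by (simp add: c_def)
    then show ?thesis unfolding sum_lessThan_add_2_shift by simp
  qed
  have "monom 1 1 * (comp_map (2*g) enl_map (row_reduction \<rho>) i k - id_map i k)
      = (\<Sum>j<2*g+2. c j * rel_coeff ?W' j k)" if k: "k < 2*g+2" for k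
    unfolding sum_c rel_coeff_row_enl_first_rows[OF k] comp_enl_map
    using i k by (auto simp: c_def row_reduction_def id_map_def monom_Suc algebra_simps)
  then show "\<exists>N c. \<forall>k<2*g+2.
      monom 1 N * (comp_map (2*g) enl_map (row_reduction \<rho>) i k - id_map i k)
      = (\<Sum>j<2*g+2. c j * rel_coeff ?W' j k)"
    by blast
qed

lemma row_reduction_comp_cong_enl:
  assumes i: "i < 2*g" and k: "k < 2*g"
  shows "comp_map (2*g+2) (row_reduction \<rho>) (comp_map (2*g+2) (cong_map (2*g+2) P) enl_map) i k
     = [:P 0 (i+2):] * [:- \<rho> k, \<rho> k:] + [:P (k+2) (i+2):]"
proof -
  have "comp_map (2*g+2) (cong_map (2*g+2) P) enl_map i j = [:P j (i+2):]"
    if "j < 2*g+2" for j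
  proof -
    have "comp_map (2*g+2) (cong_map (2*g+2) P) enl_map i j
        = (\<Sum>l<2*g+2. if l = i+2 then cong_map (2*g+2) P l j else 0)"
      unfolding comp_map_def enl_map_def by (rule sum.cong) auto
    then show ?thesis using i that by (simp add: cong_map_def)
  qed
  then have "comp_map (2*g+2) (row_reduction \<rho>) (comp_map (2*g+2) (cong_map (2*g+2) P) enl_map) i k
      = (\<Sum>j<2*g+2. [:P j (i+2):] * row_reduction \<rho> j k)"
    unfolding comp_map_def[of "2*g+2" "row_reduction \<rho>"] by (intro sum.cong) auto
  also have "\<dots> = [:P 0 (i+2):] * [:- \<rho> k, \<rho> k:] + [:P (k+2) (i+2):]"
    by (rule sum_row_reduction[OF k])
  finally show ?thesis .
qed

lemma block_mult_tau_class:
  assumes n: "n \<noteq> 0" and W: "seifert_matrix g W"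
  shows "same_tau_class (2*g) (2*g) W
     (comp_map (2*g+2) (row_reduction (\<lambda>j. W j 0 / n))
       (comp_map (2*g+2) (cong_map (2*g+2) (diag_block g (block_mult n))) enl_map))
     (cong_map (2*g) (Delta g n))"
    (is "same_tau_class _ _ _ ?\<xi> _")
proof (intro same_tau_class_if_map_eq, unfold map_eq_def, intro allI impI)
  fix i assume i: "i < 2*g"
  show "mod_eq (2*g) W (?\<xi> i) (cong_map (2*g) (Delta g n) i)"
  proof (rule mod_eq_by_relations[where c = "\<lambda>j. if i = 1 \<and> j = 0 then [:- 1 / n:] else 0"])
    fix k assume k: "k < 2*g"
    have "(\<Sum>j<2*g. (if i = 1 \<and> j = 0 then [:- 1 / n:] else 0) * rel_coeff W j k)
        = (if i = 1 then [:- 1 / n:] * rel_coeff W 0 k else 0)"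
      using k by (simp add: sum_if_eq_mult)
    moreover have "i = 0 \<or> i = 1 \<or> 2 \<le> i" "k = 0 \<or> k = 1 \<or> 2 \<le> k" by auto
    ultimately show "?\<xi> i k - cong_map (2*g) (Delta g n) i k
        = (\<Sum>j<2*g. (if i = 1 \<and> j = 0 then [:- 1 / n:] else 0) * rel_coeff W j k)"
      unfolding row_reduction_comp_cong_enl[OF i k]
      using seifert_matrix_first_columns(1)[OF W k] i k n
      by (auto simp: cong_map_def diag_block_def block_mult_def Delta_def rel_coeff_def
          field_simps)
  qed
qed

lemma block_div_tau_class:
  assumes n: "n * N = 1" and W: "seifert_matrix g W"
  shows "same_tau_class (2*g) (2*g) W
     (comp_map (2*g+2) (row_reduction (\<lambda>j. - (n * W j 1)))
       (comp_map (2*g+2) (cong_map (2*g+2) (diag_block g (block_div N))) enl_map))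
     (cong_map (2*g) (Delta g n))"
    (is "same_tau_class _ _ _ ?\<xi> _")
proof (intro same_tau_class_if_map_eq, unfold map_eq_def, intro allI impI)
  fix i assume i: "i < 2*g"
  have n0: "n \<noteq> 0" using n by auto
  then have N: "N = 1 / n" using n by (simp add: field_simps)
  have g2: "1 < 2*g" using i by presburger
  have W10: "W (Suc 0) 0 = W 0 (Suc 0) + 1"
    using seifert_matrix_first_columns(1)[OF W g2] by simp
  show "mod_eq (2*g) W (?\<xi> i) (cong_map (2*g) (Delta g n) i)"
  proof (rule mod_eq_by_relations[where c = "\<lambda>j. if i = 0 \<and> j = 1 then [:n:] else 0"])
    fix k assume k: "k < 2*g"
    have "(\<Sum>j<2*g. (if i = 0 \<and> j = 1 then [:n:] else 0) * rel_coeff W j k)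
        = (if i = 0 then [:n:] * rel_coeff W 1 k else 0)"
      using g2 by (simp add: sum_if_eq_mult)
    moreover have "i = 0 \<or> i = 1 \<or> 2 \<le> i" "k = 0 \<or> k = 1 \<or> 2 \<le> k" by auto
    ultimately show "?\<xi> i k - cong_map (2*g) (Delta g n) i k
        = (\<Sum>j<2*g. (if i = 0 \<and> j = 1 then [:n:] else 0) * rel_coeff W j k)"
      unfolding row_reduction_comp_cong_enl[OF i k]
      using seifert_matrix_first_columns(2)[OF W k] i k n0
      by (auto simp: cong_map_def diag_block_def block_div_def Delta_def rel_coeff_def N W10
          field_simps)
  qed
qed

lemma enlargement_congruence_sequence:
  assumes "integral_symplectic (g+1) P"
    and "mmul (2*g+2) (mmul (2*g+2) P (col_enl g V x \<rho>)) (mtrans P) = row_enl g W y \<sigma>"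
    and "same_tau_class (2*g) (2*g) W
      (comp_map (2*g+2) (row_reduction \<sigma>) (comp_map (2*g+2) (cong_map (2*g+2) P) enl_map)) \<eta>"
  shows "\<exists>V' W' P \<phi>.
     is_enlargement g V V' \<and> is_enlargement g W W' \<and>
     integral_symplectic (g+1) P \<and>
     W' = mmul (2*g+2) (mmul (2*g+2) P V') (mtrans P) \<and>
     well_defined_map (2*g+2) W' (2*g) W \<phi> \<and>
     map_eq (2*g) (2*g) W (comp_map (2*g+2) \<phi> enl_map) id_map \<and>
     map_eq (2*g+2) (2*g+2) W' (comp_map (2*g) enl_map \<phi>) id_map \<and>
     same_tau_class (2*g) (2*g) W
       (comp_map (2*g+2) \<phi> (comp_map (2*g+2) (cong_map (2*g+2) P) enl_map)) \<eta>"
proof (rule exI[of _ "col_enl g V x \<rho>"], rule exI[of _ "row_enl g W y \<sigma>"], rule exI[of _ P],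
    rule exI[of _ "row_reduction \<sigma>"], intro conjI)
  show "is_enlargement g V (col_enl g V x \<rho>)" "is_enlargement g W (row_enl g W y \<sigma>)"
    unfolding is_enlargement_def by blast+
qed (use assms row_reduction_well_defined row_reduction_comp_enl enl_comp_row_reduction
    in simp_all)

theorem mainTheorem14:
  fixes g :: nat and n :: rat and V W :: qmat
  assumes "g \<ge> 1"
    and "\<exists>N::nat. N > 0 \<and> (n = of_nat N \<or> n = 1 / of_nat N)"
    and "seifert_matrix g V" and "seifert_matrix g W"
    and "W = mmul (2*g) (mmul (2*g) (Delta g n) V) (Delta g n)"
  shows "\<exists>V' W' P \<phi>.
     is_enlargement g V V' \<and> is_enlargement g W W' \<and>
     integral_symplectic (g+1) P \<and>
     W' = mmul (2*g+2) (mmul (2*g+2) P V') (mtrans P) \<and>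
     well_defined_map (2*g+2) W' (2*g) W \<phi> \<and>
     map_eq (2*g) (2*g) W (comp_map (2*g+2) \<phi> enl_map) id_map \<and>
     map_eq (2*g+2) (2*g+2) W' (comp_map (2*g) enl_map \<phi>) id_map \<and>
     same_tau_class (2*g) (2*g) W
       (comp_map (2*g+2) \<phi> (comp_map (2*g+2) (cong_map (2*g+2) P) enl_map))
       (cong_map (2*g) (Delta g n))"
proof -
  note g = assms(1) and V = assms(3) and W = assms(4) and W_congruent = assms(5)
  obtain N :: nat where "N > 0" and "n = of_nat N \<or> n = 1 / of_nat N"
    using assms(2) by blast
  then consider (mult) "n = of_nat N" "N > 0" | (div) "n * of_nat N = 1"
    by fastforce
  then show ?thesis
  proof cases
    case mult
    then have n0: "n \<noteq> 0" and n_int: "n \<in> \<int>" by auto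
    show ?thesis
      using block_mult_integral_symplectic[OF g n_int]
        block_mult_congruence[OF g n0 V W_congruent] block_mult_tau_class[OF n0 W]
      by (rule enlargement_congruence_sequence)
  next
    case div
    show ?thesis
      using block_div_integral_symplectic[OF g Ints_of_nat]
        block_div_congruence[OF g div V W_congruent] block_div_tau_class[OF div W]
      by (rule enlargement_congruence_sequence)
  qed
qed

end
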